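(* If $G$ and $H$ are two connected graphs with $\mathrm{toi}(G)=\mathrm{toi}(H)=3$, then $\mathrm{toi}(G \square H) \geq 4$. Furthermore, equality holds when $G=H=K_3$.
   Context: $\mathrm{toi}(G)$ is the maximum $t$ such that $G$ contains a totally odd strong immersion of $K_t$ (an injective map of $V(K_t)$ into $V(G)$ with pairwise edge-disjoint odd paths joining each pair of terminals, no terminal being an interior vertex of any path). $G\square H$ is the Cartesian product: vertex set $V(G)\times V(H)$, with $(g_1,h_1)\sim(g_2,h_2)$ iff ($g_1=g_2$ and $h_1h_2\in E(H)$) or ($h_1=h_2$ and $g_1g_2\in E(G)$). *)

theory Defs
  imports Main
begin

text \<open>A graph is a pair (vertex set, edge set); edges are 2-element vertex sets.\<close>
type_synonym 'a graph = "'a set \<times> 'a set set"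

definition verts :: "'a graph \<Rightarrow> 'a set" where "verts G = fst G"
definition edges :: "'a graph \<Rightarrow> 'a set set" where "edges G = snd G"

definition simple_graph :: "'a graph \<Rightarrow> bool" where
  "simple_graph G \<longleftrightarrow> finite (verts G) \<and>
     (\<forall>e\<in>edges G. \<exists>u v. e = {u, v} \<and> u \<noteq> v \<and> u \<in> verts G \<and> v \<in> verts G)"

definition is_path :: "'a graph \<Rightarrow> 'a list \<Rightarrow> bool" where
  "is_path G p \<longleftrightarrow> p \<noteq> [] \<and> distinct p \<and> set p \<subseteq> verts G \<and>
     (\<forall>i. Suc i < length p \<longrightarrow> {p ! i, p ! Suc i} \<in> edges G)"

definition path_edges :: "'a list \<Rightarrow> 'a set set" where
  "path_edges p = {{p ! i, p ! Suc i} | i. Suc i < length p}"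

definition interior :: "'a list \<Rightarrow> 'a set" where
  "interior p = set (butlast (tl p))"

definition connected_graph :: "'a graph \<Rightarrow> bool" where
  "connected_graph G \<longleftrightarrow> verts G \<noteq> {} \<and>
     (\<forall>u\<in>verts G. \<forall>v\<in>verts G. \<exists>p. is_path G p \<and> hd p = u \<and> last p = v)"

definition toi_immersion :: "'a graph \<Rightarrow> nat \<Rightarrow> (nat \<Rightarrow> 'a) \<Rightarrow> (nat \<Rightarrow> nat \<Rightarrow> 'a list) \<Rightarrow> bool" where
  "toi_immersion G t f P \<longleftrightarrow>
     inj_on f {..<t} \<and> f ` {..<t} \<subseteq> verts G \<and>
     (\<forall>i j. i < j \<and> j < t \<longrightarrow>
        is_path G (P i j) \<and> hd (P i j) = f i \<and> last (P i j) = f j \<and>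
        odd (length (P i j) - 1) \<and> (\<forall>k<t. f k \<notin> interior (P i j))) \<and>
     (\<forall>i j k l. i < j \<and> j < t \<and> k < l \<and> l < t \<and> (i, j) \<noteq> (k, l) \<longrightarrow>
        path_edges (P i j) \<inter> path_edges (P k l) = {})"

definition has_toi :: "'a graph \<Rightarrow> nat \<Rightarrow> bool" where
  "has_toi G t \<longleftrightarrow> (\<exists>f P. toi_immersion G t f P)"

definition toi :: "'a graph \<Rightarrow> nat" where
  "toi G = Max {t. has_toi G t}"

definition cart_prod :: "'a graph \<Rightarrow> 'b graph \<Rightarrow> ('a \<times> 'b) graph" where
  "cart_prod G H = (verts G \<times> verts H,
     {{(g, h1), (g, h2)} | g h1 h2. g \<in> verts G \<and> {h1, h2} \<in> edges H} \<union>
     {{(g1, h), (g2, h)} | g1 g2 h. h \<in> verts H \<and> {g1, g2} \<in> edges G})"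

definition K3 :: "nat graph" where
  "K3 = ({0, 1, 2}, {{0, 1}, {0, 2}, {1, 2}})"

end

theory Submission
  imports Defs
begin

(*
  Lower bound: let a0, a1, a2 and b0, b1, b2 be the terminals of totally odd immersions of K3 in G
  and H. In the Cartesian product, the terminals (a0, b0), (a0, b1), (a1, b0), (a1, b1) are joined
  pairwise by copies of the odd paths a0-a1 and b0-b1 in the layers through them, and each of the
  two diagonal pairs by a concatenation of three odd paths lying in three further layers (for
  (a0, b0) and (a1, b1): the path b0-b2 at a0, a0-a1 at b2 and b2-b1 at a1). Three odd lengths add
  up to an odd length; distinct layers share no edges, and copies lying in the same layer come
  from edge-disjoint paths.

  Upper bound: K3 x K3 is 4-regular, so at a terminal of a totally odd immersion of K5 every edge
  starts a route, and a route entering a non-terminal vertex continues to another non-terminal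
  vertex. Hence a non-terminal vertex has at most two terminal neighbours. This forces the five
  terminals to form a row plus a column, leaving a 2 x 2 rectangle of non-terminals. Each of its
  four vertices is entered from the terminal in its column by a route with exactly one edge inside
  the rectangle, and a short case analysis on the rectangle shows that two of these four routes
  would join the same pair of terminals.
*)

section \<open>Paths\<close>

lemma path_edges_Nil [simp]: "path_edges [] = {}"
  by (simp add: path_edges_def)

lemma path_edges_singleton [simp]: "path_edges [x] = {}"
  by (simp add: path_edges_def)

lemma path_edges_conv: "path_edges xs = (\<lambda>i. {xs ! i, xs ! Suc i}) ` {..<length xs - 1}"
  unfolding path_edges_def by auto

lemma path_edges_Cons_Cons [simp]:
  "path_edges (x # y # xs) = insert {x, y} (path_edges (y # xs))"
  unfolding path_edges_conv by (simp add: lessThan_Suc_eq_insert_0 image_image del: lessThan_Suc)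

lemma nth_edge_in_path_edges: "Suc i < length xs \<Longrightarrow> {xs ! i, xs ! Suc i} \<in> path_edges xs"
  unfolding path_edges_def by blast

lemma path_edge_subset_set: "e \<in> path_edges xs \<Longrightarrow> e \<subseteq> set xs"
  unfolding path_edges_def by auto

lemma path_edge_doubleton:
  assumes "distinct xs" "e \<in> path_edges xs"
  obtains x y where "x \<noteq> y" "e = {x, y}"
proof -
  obtain i where "Suc i < length xs" "e = {xs ! i, xs ! Suc i}"
    using assms(2) by (auto simp: path_edges_def)
  moreover have "xs ! i \<noteq> xs ! Suc i"
    using assms(1) calculation(1) by (simp add: nth_eq_iff_index_eq)
  ultimately show thesis
    using that by blast
qed

lemma path_edges_append_tl:
  "xs \<noteq> [] \<Longrightarrow> ys \<noteq> [] \<Longrightarrow> last xs = hd ys \<Longrightarrow>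
   path_edges (xs @ tl ys) = path_edges xs \<union> path_edges ys"
  by (induction xs rule: induct_list012) (auto simp: neq_Nil_conv)

lemma path_edges_rev [simp]: "path_edges (rev xs) = path_edges xs"
proof (induction xs)
  case (Cons x xs)
  show ?case
  proof (cases xs)
    case (Cons y ys)
    have "rev (x # xs) = rev xs @ tl [y, x]" by simp
    then show ?thesis
      using Cons.IH path_edges_append_tl[of "rev xs" "[y, x]"] \<open>xs = y # ys\<close>
      by (auto simp: last_rev insert_commute)
  qed simp
qed simp

lemma path_edges_map: "path_edges (map g xs) = (`) g ` path_edges xs"
  by (induction xs rule: induct_list012) auto

lemma interior_rev [simp]: "interior (rev xs) = interior xs"
  unfolding interior_def by (metis butlast_rev butlast_tl rev_rev_ident set_rev)

lemma interior_map: "interior (map g xs) = g ` interior xs"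
  unfolding interior_def by (simp flip: map_tl map_butlast)

lemma nth_in_interior:
  assumes "0 < i" "Suc i < length xs" shows "xs ! i \<in> interior xs"
proof -
  have "butlast (tl xs) ! (i - 1) = xs ! i" "i - 1 < length (butlast (tl xs))"
    using assms by (simp_all add: nth_butlast nth_tl)
  then show ?thesis unfolding interior_def by (metis nth_mem)
qed

lemma interior_append_tl:
  assumes "xs \<noteq> []" "last xs = hd ys"
  shows "interior (xs @ tl ys) \<subseteq> interior xs \<union> {last xs} \<union> interior ys"
proof -
  have "set (tl xs) \<subseteq> interior xs \<union> {last xs}"
    using assms(1) unfolding interior_def
    by (cases "tl xs" rule: rev_cases) (auto simp: last_tl[symmetric])
  then show ?thesis
    using assms(1) unfolding interior_def
    by (auto simp: butlast_append dest: in_set_butlastD)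
qed

lemma is_path_iff:
  "is_path G p \<longleftrightarrow> p \<noteq> [] \<and> distinct p \<and> set p \<subseteq> verts G \<and> path_edges p \<subseteq> edges G"
  unfolding is_path_def path_edges_def by blast

lemma is_path_append_tl:
  assumes "is_path G p" "is_path G q" "last p = hd q" "set p \<inter> set q \<subseteq> {hd q}"
  shows "is_path G (p @ tl q)"
proof -
  have "q \<noteq> []" "distinct q" using assms(2) by (auto simp: is_path_iff)
  then have "set p \<inter> set (tl q) = {}" "set (tl q) \<subseteq> set q"
    using assms(4) by (auto simp: neq_Nil_conv)
  then show ?thesis
    using assms by (auto simp: is_path_iff path_edges_append_tl distinct_tl)
qed

section \<open>Odd paths and totally odd immersions\<close>

definition odd_path :: "'a graph \<Rightarrow> 'a set \<Rightarrow> 'a \<Rightarrow> 'a \<Rightarrow> 'a list \<Rightarrow> bool" where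
  "odd_path G S u v p \<longleftrightarrow> is_path G p \<and> hd p = u \<and> last p = v \<and>
     odd (length p - 1) \<and> S \<inter> interior p = {}"

lemma toi_immersion_iff:
  "toi_immersion G t f P \<longleftrightarrow>
     inj_on f {..<t} \<and> f ` {..<t} \<subseteq> verts G \<and>
     (\<forall>i j. i < j \<and> j < t \<longrightarrow> odd_path G (f ` {..<t}) (f i) (f j) (P i j)) \<and>
     (\<forall>i j k l. i < j \<and> j < t \<and> k < l \<and> l < t \<and> (i, j) \<noteq> (k, l) \<longrightarrow>
        path_edges (P i j) \<inter> path_edges (P k l) = {})"
proof -
  have "f ` {..<t} \<inter> X = {} \<longleftrightarrow> (\<forall>k<t. f k \<notin> X)" for X
    by blast
  then show ?thesis
    unfolding toi_immersion_def odd_path_def by presburger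
qed

lemma odd_path_rev: "odd_path G S u v p \<Longrightarrow> odd_path G S v u (rev p)"
  by (auto simp: odd_path_def is_path_iff hd_rev last_rev)

lemma odd_path_subset: "odd_path G S u v p \<Longrightarrow> S' \<subseteq> S \<Longrightarrow> odd_path G S' u v p"
  by (auto simp: odd_path_def)

lemma odd_path_join3:
  assumes p: "odd_path G S u v p" and q: "odd_path G S v w q" and r: "odd_path G S w z r"
    and "v \<notin> S" "w \<notin> S"
    and "set p \<inter> set q \<subseteq> {v}" "set q \<inter> set r \<subseteq> {w}" "set p \<inter> set r = {}"
  shows "odd_path G S u z (p @ tl q @ tl r)"
    and "path_edges (p @ tl q @ tl r) = path_edges p \<union> path_edges q \<union> path_edges r"
proof -
  have ne: "p \<noteq> []" "q \<noteq> []" "r \<noteq> []"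
    using p q r by (auto simp: odd_path_def is_path_iff)
  have ends: "last p = v" "hd q = v" "last q = w" "hd r = w" "hd p = u" "last r = z"
    using p q r by (auto simp: odd_path_def)
  have paths: "is_path G p" "is_path G q" "is_path G r"
    using p q r by (auto simp: odd_path_def)
  have qr: "is_path G (q @ tl r)"
    using is_path_append_tl[OF paths(2,3)] assms(7) ends by simp
  have "set (q @ tl r) \<subseteq> set q \<union> set r"
    using ne(3) by (auto simp: neq_Nil_conv)
  with assms(6,8) have "set p \<inter> set (q @ tl r) \<subseteq> {v}"
    by blast
  then have "is_path G (p @ tl (q @ tl r))"
    using is_path_append_tl[OF paths(1) qr] ends ne(2) by simp
  moreover have "interior (p @ tl (q @ tl r)) \<subseteq>
      interior p \<union> {v} \<union> (interior q \<union> {w} \<union> interior r)"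
    using interior_append_tl[of p "q @ tl r"] interior_append_tl[of q r] ne ends by auto
  moreover have "odd (length (p @ tl q @ tl r) - 1)"
  proof -
    have "length (p @ tl q @ tl r) - 1 = (length p - 1) + (length q - 1) + (length r - 1)"
      using ne by (auto simp: neq_Nil_conv)
    then show ?thesis
      using p q r by (simp add: odd_path_def)
  qed
  moreover have "last (p @ tl q @ tl r) = z" "hd (p @ tl q @ tl r) = u"
    using ne ends by (auto simp: neq_Nil_conv)
  ultimately show "odd_path G S u z (p @ tl q @ tl r)"
    using p q r assms(4,5) unfolding odd_path_def by auto
  show "path_edges (p @ tl q @ tl r) = path_edges p \<union> path_edges q \<union> path_edges r"
    using path_edges_append_tl[of p "q @ tl r"] path_edges_append_tl[of q r] ne ends
    by auto
qed

lemma odd_path_nth: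
  assumes "odd_path G S u v p"
  shows "p ! 0 = u" "p ! (length p - 1) = v" "2 \<le> length p" "even (length p)" "distinct p"
    and "\<And>i. 0 < i \<Longrightarrow> Suc i < length p \<Longrightarrow> p ! i \<notin> S"
    and "\<And>i. Suc i < length p \<Longrightarrow> {p ! i, p ! Suc i} \<in> edges G"
proof -
  have p: "p \<noteq> []" "distinct p" "odd (length p - 1)" "hd p = u" "last p = v"
    "S \<inter> interior p = {}" "\<And>i. Suc i < length p \<Longrightarrow> {p ! i, p ! Suc i} \<in> edges G"
    using assms by (auto simp: odd_path_def is_path_def)
  then show "p ! 0 = u" "p ! (length p - 1) = v" "distinct p"
    by (simp_all add: hd_conv_nth last_conv_nth)
  have "length p \<noteq> 0"
    using p(1) by simp
  then show "2 \<le> length p" "even (length p)"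
    using p(3) by presburger+
  show "\<And>i. 0 < i \<Longrightarrow> Suc i < length p \<Longrightarrow> p ! i \<notin> S"
    using p(6) nth_in_interior by blast
  show "\<And>i. Suc i < length p \<Longrightarrow> {p ! i, p ! Suc i} \<in> edges G"
    by (fact p(7))
qed

lemma toi_immersion_mono:
  assumes "toi_immersion G t f P" "s \<le> t"
  shows "toi_immersion G s f P"
proof -
  have sub: "{..<s} \<subseteq> {..<t}"
    using assms(2) by auto
  note imm = assms(1)[unfolded toi_immersion_iff]
  have "inj_on f {..<s}"
    using imm[THEN conjunct1] sub by (rule inj_on_subset)
  moreover have "f ` {..<s} \<subseteq> verts G"
    using image_mono[OF sub] imm[THEN conjunct2, THEN conjunct1] by (rule order_trans)
  moreover have "odd_path G (f ` {..<s}) (f i) (f j) (P i j)" if "i < j \<and> j < s" for i j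
  proof (rule odd_path_subset[OF _ image_mono[OF sub]])
    show "odd_path G (f ` {..<t}) (f i) (f j) (P i j)"
      using imm[THEN conjunct2, THEN conjunct2, THEN conjunct1, rule_format, of i j] that assms(2)
      by simp
  qed
  moreover have "path_edges (P i j) \<inter> path_edges (P k l) = {}"
    if "i < j \<and> j < s \<and> k < l \<and> l < s \<and> (i, j) \<noteq> (k, l)" for i j k l
    using imm[THEN conjunct2, THEN conjunct2, THEN conjunct2, rule_format, of i j k l] that assms(2)
    by simp
  ultimately show ?thesis
    unfolding toi_immersion_iff by blast
qed

lemma has_toi_mono: "has_toi G t \<Longrightarrow> s \<le> t \<Longrightarrow> has_toi G s"
  unfolding has_toi_def using toi_immersion_mono by blast

lemma has_toi_le_card:
  assumes "finite (verts G)" "has_toi G t"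
  shows "t \<le> card (verts G)"
proof -
  obtain f P where f: "inj_on f {..<t}" "f ` {..<t} \<subseteq> verts G"
    using assms(2) by (auto simp: has_toi_def toi_immersion_def)
  have "card (f ` {..<t}) \<le> card (verts G)"
    by (rule card_mono[OF assms(1) f(2)])
  moreover have "card (f ` {..<t}) = t"
    using f(1) by (simp add: card_image)
  ultimately show ?thesis
    by simp
qed

lemma finite_has_toi: "finite (verts G) \<Longrightarrow> finite {t. has_toi G t}"
  by (rule finite_subset[of _ "{..card (verts G)}"]) (auto simp: has_toi_le_card)

lemma has_toi_toi:
  assumes "finite (verts G)"
  shows "has_toi G (toi G)"
proof -
  have "has_toi G 0"
    by (simp add: has_toi_def toi_immersion_def)
  then have "{t. has_toi G t} \<noteq> {}"
    by blast
  then have "Max {t. has_toi G t} \<in> {t. has_toi G t}"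
    by (rule Max_in[OF finite_has_toi[OF assms]])
  then show ?thesis
    by (simp add: toi_def)
qed

lemma le_toi: "finite (verts G) \<Longrightarrow> has_toi G t \<Longrightarrow> t \<le> toi G"
  unfolding toi_def by (rule Max_ge[OF finite_has_toi]) simp_all

lemma toi_eqI:
  assumes "finite (verts G)" "has_toi G t" "\<not> has_toi G (Suc t)"
  shows "toi G = t"
proof (rule antisym)
  show "toi G \<le> t"
  proof (rule ccontr)
    assume "\<not> toi G \<le> t"
    then show False
      using has_toi_mono[OF has_toi_toi[OF assms(1)], of "Suc t"] assms(3) by simp
  qed
qed (rule le_toi[OF assms(1,2)])

section \<open>Totally odd immersions in Cartesian products\<close>

lemma verts_cart_prod: "verts (cart_prod G H) = verts G \<times> verts H"
  by (simp add: cart_prod_def verts_def)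

lemma edges_cart_prod_iff:
  "{u, v} \<in> edges (cart_prod G H) \<longleftrightarrow>
     fst u = fst v \<and> fst u \<in> verts G \<and> {snd u, snd v} \<in> edges H \<or>
     snd u = snd v \<and> snd u \<in> verts H \<and> {fst u, fst v} \<in> edges G"
proof (cases u; cases v)
  fix a b c d assume uv: "u = (a, b)" "v = (c, d)"
  have "{(a, b), (c, d)} = {(g, h1), (g, h2)} \<longleftrightarrow> a = g \<and> c = g \<and> {b, d} = {h1, h2}"
    for g h1 h2 by (auto simp: doubleton_eq_iff)
  moreover have "{(a, b), (c, d)} = {(g1, h), (g2, h)} \<longleftrightarrow> b = h \<and> d = h \<and> {a, c} = {g1, g2}"
    for g1 g2 h by (auto simp: doubleton_eq_iff)
  ultimately show ?thesis
    unfolding uv cart_prod_def edges_def by auto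
qed

lemma is_path_map:
  assumes "is_path G p" "inj g" "g ` verts G \<subseteq> verts G'"
    and "\<And>x y. {x, y} \<in> edges G \<Longrightarrow> {g x, g y} \<in> edges G'"
  shows "is_path G' (map g p)"
proof -
  have "set (map g p) \<subseteq> verts G'"
    using assms(1,3) by (auto simp: is_path_def)
  then show ?thesis
    using assms(1,2,4) unfolding is_path_def by (auto simp: distinct_map inj_on_subset)
qed

lemma odd_path_map:
  assumes "odd_path G A u v p" "is_path G' (map g p)" "\<And>x. g x \<in> S \<Longrightarrow> x \<in> A"
  shows "odd_path G' S (g u) (g v) (map g p)"
proof -
  have "S \<inter> g ` interior p = {}"
    using assms(1,3) unfolding odd_path_def by blast
  then show ?thesis
    using assms(1,2) by (auto simp: odd_path_def is_path_iff hd_map last_map interior_map)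
qed

lemma odd_path_layer_left:
  assumes "odd_path G A u v p" "b \<in> verts H"
  shows "odd_path (cart_prod G H) (A \<times> B) (u, b) (v, b) (map (\<lambda>x. (x, b)) p)"
proof (rule odd_path_map[where g = "\<lambda>x. (x, b)", OF assms(1)])
  show "is_path (cart_prod G H) (map (\<lambda>x. (x, b)) p)"
    using assms by (intro is_path_map) (auto simp: odd_path_def edges_cart_prod_iff verts_cart_prod inj_def)
qed auto

lemma odd_path_layer_right:
  assumes "odd_path H B u v q" "a \<in> verts G"
  shows "odd_path (cart_prod G H) (A \<times> B) (a, u) (a, v) (map (\<lambda>y. (a, y)) q)"
proof (rule odd_path_map[where g = "\<lambda>y. (a, y)", OF assms(1)])
  show "is_path (cart_prod G H) (map (\<lambda>y. (a, y)) q)"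
    using assms by (intro is_path_map) (auto simp: odd_path_def edges_cart_prod_iff verts_cart_prod inj_def)
qed auto

lemma path_edges_map_disjoint:
  assumes "inj g" "path_edges p \<inter> path_edges q = {}"
  shows "path_edges (map g p) \<inter> path_edges (map g q) = {}"
proof -
  have "inj ((`) g)"
    using assms(1) by (simp add: inj_def inj_image_eq_iff)
  then show ?thesis
    using assms(2) by (simp add: path_edges_map flip: image_Int)
qed

lemma path_edges_map_disjoint_ranges:
  assumes "distinct (map g p)" "range g \<inter> range h \<subseteq> {c}"
  shows "path_edges (map g p) \<inter> path_edges (map h q) = {}"
proof (rule ccontr)
  assume "path_edges (map g p) \<inter> path_edges (map h q) \<noteq> {}"
  then obtain e where e: "e \<in> path_edges (map g p)" "e \<in> path_edges (map h q)"
    by blast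
  have "e \<subseteq> g ` set p" "e \<subseteq> h ` set q"
    using path_edge_subset_set[OF e(1)] path_edge_subset_set[OF e(2)] by simp_all
  then have "e \<subseteq> range g \<inter> range h"
    by blast
  moreover obtain x y where "x \<noteq> y" "e = {x, y}"
    using path_edge_doubleton[OF assms(1) e(1)] .
  ultimately show False
    using assms(2) by auto
qed

lemma path_edges_layers_disjoint:
  "distinct p \<Longrightarrow> path_edges (map (\<lambda>x. (x, b)) p) \<inter> path_edges (map (\<lambda>y. (a, y)) q) = {}"
  by (rule path_edges_map_disjoint_ranges[where c = "(a, b)"]) (auto simp: distinct_map inj_on_def)

lemma path_edges_left_layers_disjoint:
  assumes "distinct p" "b \<noteq> b' \<or> path_edges p \<inter> path_edges p' = {}"
  shows "path_edges (map (\<lambda>x. (x, b)) p) \<inter> path_edges (map (\<lambda>x. (x, b')) p') = {}"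
proof (cases "b = b'")
  case True
  with assms(2) show ?thesis
    using path_edges_map_disjoint[of "\<lambda>x. (x, b)" p p'] by (simp add: inj_def)
next
  case False
  then show ?thesis
    using assms(1) by (intro path_edges_map_disjoint_ranges[where c = undefined]) (auto simp: distinct_map inj_on_def)
qed

lemma path_edges_right_layers_disjoint:
  assumes "distinct q" "a \<noteq> a' \<or> path_edges q \<inter> path_edges q' = {}"
  shows "path_edges (map (\<lambda>y. (a, y)) q) \<inter> path_edges (map (\<lambda>y. (a', y)) q') = {}"
proof (cases "a = a'")
  case True
  with assms(2) show ?thesis
    using path_edges_map_disjoint[of "\<lambda>y. (a, y)" q q'] by (simp add: inj_def)
next
  case False
  then show ?thesis
    using assms(1) by (intro path_edges_map_disjoint_ranges[where c = undefined]) (auto simp: distinct_map inj_on_def)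
qed

definition odd_triangle ::
    "'a graph \<Rightarrow> 'a \<Rightarrow> 'a \<Rightarrow> 'a \<Rightarrow> 'a list \<Rightarrow> 'a list \<Rightarrow> 'a list \<Rightarrow> bool" where
  "odd_triangle G a0 a1 a2 p01 p02 p12 \<longleftrightarrow>
     distinct [a0, a1, a2] \<and> {a0, a1, a2} \<subseteq> verts G \<and>
     odd_path G {a0, a1, a2} a0 a1 p01 \<and> odd_path G {a0, a1, a2} a0 a2 p02 \<and>
     odd_path G {a0, a1, a2} a1 a2 p12 \<and>
     path_edges p01 \<inter> path_edges p02 = {} \<and> path_edges p01 \<inter> path_edges p12 = {} \<and>
     path_edges p02 \<inter> path_edges p12 = {}"

lemma has_toi_3_odd_triangle:
  assumes "has_toi G 3"
  shows "\<exists>a0 a1 a2 p01 p02 p12. odd_triangle G a0 a1 a2 p01 p02 p12"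
proof -
  obtain f P where imm: "toi_immersion G 3 f P"
    using assms by (auto simp: has_toi_def)
  have three: "{..<3} = {0, 1, 2::nat}"
    by auto
  note imm = imm[unfolded toi_immersion_iff three]
  have "odd_path G {f 0, f 1, f 2} (f i) (f j) (P i j)" if "i < j" "j < 3" for i j
    using imm that by auto
  moreover have "path_edges (P i j) \<inter> path_edges (P k l) = {}"
    if "i < j" "j < 3" "k < l" "l < 3" "(i, j) \<noteq> (k, l)" for i j k l
    using imm that by blast
  moreover have "distinct [f 0, f 1, f 2]"
    using imm by (auto simp: inj_on_def)
  ultimately have "odd_triangle G (f 0) (f 1) (f 2) (P 0 1) (P 0 2) (P 1 2)"
    using imm by (auto simp: odd_triangle_def)
  then show ?thesis
    by blast
qed

locale odd_triangles =
  fixes G :: "'a graph" and a0 a1 a2 :: 'a and p01 p02 p12 :: "'a list"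
    and H :: "'b graph" and b0 b1 b2 :: 'b and q01 q02 q12 :: "'b list"
  assumes G: "odd_triangle G a0 a1 a2 p01 p02 p12"
    and H: "odd_triangle H b0 b1 b2 q01 q02 q12"
begin

lemma G_terminals: "distinct [a0, a1, a2]" "{a0, a1, a2} \<subseteq> verts G"
  and G_paths: "odd_path G {a0, a1, a2} a0 a1 p01" "odd_path G {a0, a1, a2} a0 a2 p02"
    "odd_path G {a0, a1, a2} a1 a2 p12"
  and G_disjoint: "path_edges p01 \<inter> path_edges p02 = {}" "path_edges p01 \<inter> path_edges p12 = {}"
    "path_edges p02 \<inter> path_edges p12 = {}"
  and H_terminals: "distinct [b0, b1, b2]" "{b0, b1, b2} \<subseteq> verts H"
  and H_paths: "odd_path H {b0, b1, b2} b0 b1 q01" "odd_path H {b0, b1, b2} b0 b2 q02"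
    "odd_path H {b0, b1, b2} b1 b2 q12"
  and H_disjoint: "path_edges q01 \<inter> path_edges q02 = {}" "path_edges q01 \<inter> path_edges q12 = {}"
    "path_edges q02 \<inter> path_edges q12 = {}"
  using G H by (simp_all add: odd_triangle_def)

abbreviation X :: "('a \<times> 'b) graph" where
  "X \<equiv> cart_prod G H"

definition terminal :: "nat \<Rightarrow> 'a \<times> 'b" where
  "terminal = (!) [(a0, b0), (a0, b1), (a1, b0), (a1, b1)]"

definition diagonal03 :: "('a \<times> 'b) list" where
  "diagonal03 = map (\<lambda>y. (a0, y)) q02 @ tl (map (\<lambda>x. (x, b2)) p01) @ tl (map (\<lambda>y. (a1, y)) (rev q12))"

definition diagonal12 :: "('a \<times> 'b) list" where
  "diagonal12 = map (\<lambda>x. (x, b1)) p02 @ tl (map (\<lambda>y. (a2, y)) (rev q01)) @ tl (map (\<lambda>x. (x, b0)) (rev p12))"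

definition route4 :: "nat \<Rightarrow> nat \<Rightarrow> ('a \<times> 'b) list" where
  "route4 i j =
    (if (i, j) = (0, 1) then map (\<lambda>y. (a0, y)) q01
     else if (i, j) = (0, 2) then map (\<lambda>x. (x, b0)) p01
     else if (i, j) = (0, 3) then diagonal03
     else if (i, j) = (1, 2) then diagonal12
     else if (i, j) = (1, 3) then map (\<lambda>x. (x, b1)) p01
     else map (\<lambda>y. (a1, y)) q01)"

lemma terminal_image: "terminal ` {..<4} = {a0, a1} \<times> {b0, b1}"
proof -
  have "{..<4} = {0, 1, 2, 3::nat}"
    by auto
  then show ?thesis
    by (auto simp: terminal_def)
qed

lemma left_layer_odd_path:
  "odd_path G {a0, a1, a2} x x' p \<Longrightarrow> b \<in> {b0, b1, b2} \<Longrightarrow>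
   odd_path X ({a0, a1} \<times> {b0, b1}) (x, b) (x', b) (map (\<lambda>x. (x, b)) p)"
  using H_terminals(2) by (intro odd_path_subset[OF odd_path_layer_left]) auto

lemma right_layer_odd_path:
  "odd_path H {b0, b1, b2} y y' q \<Longrightarrow> a \<in> {a0, a1, a2} \<Longrightarrow>
   odd_path X ({a0, a1} \<times> {b0, b1}) (a, y) (a, y') (map (\<lambda>y. (a, y)) q)"
  using G_terminals(2) by (intro odd_path_subset[OF odd_path_layer_right]) auto

lemma triangle_vertices: "a0 \<in> {a0, a1, a2}" "a1 \<in> {a0, a1, a2}" "a2 \<in> {a0, a1, a2}"
  "b0 \<in> {b0, b1, b2}" "b1 \<in> {b0, b1, b2}" "b2 \<in> {b0, b1, b2}"
  by simp_all

lemma diagonal03: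
  "odd_path X ({a0, a1} \<times> {b0, b1}) (a0, b0) (a1, b1) diagonal03"
  "path_edges diagonal03 = path_edges (map (\<lambda>y. (a0, y)) q02) \<union>
     path_edges (map (\<lambda>x. (x, b2)) p01) \<union> path_edges (map (\<lambda>y. (a1, y)) q12)"
proof -
  have "(a0, b2) \<notin> {a0, a1} \<times> {b0, b1}" "(a1, b2) \<notin> {a0, a1} \<times> {b0, b1}"
    "set (map (\<lambda>y. (a0, y)) q02) \<inter> set (map (\<lambda>x. (x, b2)) p01) \<subseteq> {(a0, b2)}"
    "set (map (\<lambda>x. (x, b2)) p01) \<inter> set (map (\<lambda>y. (a1, y)) (rev q12)) \<subseteq> {(a1, b2)}"
    "set (map (\<lambda>y. (a0, y)) q02) \<inter> set (map (\<lambda>y. (a1, y)) (rev q12)) = {}"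
    using G_terminals H_terminals by auto
  note join = odd_path_join3[OF right_layer_odd_path[OF H_paths(2) triangle_vertices(1)]
      left_layer_odd_path[OF G_paths(1) triangle_vertices(6)]
      right_layer_odd_path[OF odd_path_rev[OF H_paths(3)] triangle_vertices(2)] this, folded diagonal03_def]
  then show "odd_path X ({a0, a1} \<times> {b0, b1}) (a0, b0) (a1, b1) diagonal03"
    by blast
  show "path_edges diagonal03 = path_edges (map (\<lambda>y. (a0, y)) q02) \<union>
     path_edges (map (\<lambda>x. (x, b2)) p01) \<union> path_edges (map (\<lambda>y. (a1, y)) q12)"
    using join(2) by (simp flip: rev_map)
qed

lemma diagonal12:
  "odd_path X ({a0, a1} \<times> {b0, b1}) (a0, b1) (a1, b0) diagonal12"
  "path_edges diagonal12 = path_edges (map (\<lambda>x. (x, b1)) p02) \<union>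
     path_edges (map (\<lambda>y. (a2, y)) q01) \<union> path_edges (map (\<lambda>x. (x, b0)) p12)"
proof -
  have "(a2, b1) \<notin> {a0, a1} \<times> {b0, b1}" "(a2, b0) \<notin> {a0, a1} \<times> {b0, b1}"
    "set (map (\<lambda>x. (x, b1)) p02) \<inter> set (map (\<lambda>y. (a2, y)) (rev q01)) \<subseteq> {(a2, b1)}"
    "set (map (\<lambda>y. (a2, y)) (rev q01)) \<inter> set (map (\<lambda>x. (x, b0)) (rev p12)) \<subseteq> {(a2, b0)}"
    "set (map (\<lambda>x. (x, b1)) p02) \<inter> set (map (\<lambda>x. (x, b0)) (rev p12)) = {}"
    using G_terminals H_terminals by auto
  note join = odd_path_join3[OF left_layer_odd_path[OF G_paths(2) triangle_vertices(5)]
      right_layer_odd_path[OF odd_path_rev[OF H_paths(1)] triangle_vertices(3)]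
      left_layer_odd_path[OF odd_path_rev[OF G_paths(3)] triangle_vertices(4)] this, folded diagonal12_def]
  then show "odd_path X ({a0, a1} \<times> {b0, b1}) (a0, b1) (a1, b0) diagonal12"
    by blast
  show "path_edges diagonal12 = path_edges (map (\<lambda>x. (x, b1)) p02) \<union>
     path_edges (map (\<lambda>y. (a2, y)) q01) \<union> path_edges (map (\<lambda>x. (x, b0)) p12)"
    using join(2) by (simp flip: rev_map)
qed

lemma pairs_below_4:
  "i < j \<Longrightarrow> j < (4::nat) \<Longrightarrow> (i, j) \<in> {(0, 1), (0, 2), (0, 3), (1, 2), (1, 3), (2, 3)}"
  by auto

lemma odd_path_route4:
  assumes "i < j" "j < 4"
  shows "odd_path X (terminal ` {..<4}) (terminal i) (terminal j) (route4 i j)"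
proof -
  let ?T = "{a0, a1} \<times> {b0, b1}"
  have "odd_path X ?T (terminal 0) (terminal 1) (route4 0 1)"
    "odd_path X ?T (terminal 0) (terminal 2) (route4 0 2)"
    "odd_path X ?T (terminal 0) (terminal 3) (route4 0 3)"
    "odd_path X ?T (terminal 1) (terminal 2) (route4 1 2)"
    "odd_path X ?T (terminal 1) (terminal 3) (route4 1 3)"
    "odd_path X ?T (terminal 2) (terminal 3) (route4 2 3)"
    using diagonal03(1) diagonal12(1) left_layer_odd_path[OF G_paths(1)] right_layer_odd_path[OF H_paths(1)]
    by (simp_all add: route4_def terminal_def)
  then show ?thesis
    using pairs_below_4[OF assms] unfolding terminal_image by fast
qed

lemma route4_edges_disjoint:
  assumes "i < j" "j < 4" "k < l" "l < 4" "(i, j) \<noteq> (k, l)"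
  shows "path_edges (route4 i j) \<inter> path_edges (route4 k l) = {}"
proof -
  have distinct: "distinct p01" "distinct p02" "distinct p12" "distinct q01" "distinct q02" "distinct q12"
    using G_paths H_paths by (auto simp: odd_path_def is_path_def)
  have ne: "a0 \<noteq> a1" "a0 \<noteq> a2" "a1 \<noteq> a2" "b0 \<noteq> b1" "b0 \<noteq> b2" "b1 \<noteq> b2"
    using G_terminals H_terminals by auto
  have E: "path_edges (route4 0 1) = path_edges (map (\<lambda>y. (a0, y)) q01)"
    "path_edges (route4 0 2) = path_edges (map (\<lambda>x. (x, b0)) p01)"
    "path_edges (route4 0 3) = path_edges diagonal03"
    "path_edges (route4 1 2) = path_edges diagonal12"
    "path_edges (route4 1 3) = path_edges (map (\<lambda>x. (x, b1)) p01)"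
    "path_edges (route4 2 3) = path_edges (map (\<lambda>y. (a1, y)) q01)"
    by (simp_all add: route4_def)
  note layers = path_edges_layers_disjoint path_edges_layers_disjoint[THEN trans[OF Int_commute]]
    path_edges_left_layers_disjoint path_edges_right_layers_disjoint
  from pairs_below_4[OF assms(1,2)] pairs_below_4[OF assms(3,4)] assms(5) show ?thesis
    by (elim insertE emptyE; clarify; simp only: E diagonal03(2) diagonal12(2) Int_Un_distrib
        Int_Un_distrib2 layers distinct G_disjoint H_disjoint G_disjoint[THEN trans[OF Int_commute]]
        H_disjoint[THEN trans[OF Int_commute]] ne ne[THEN not_sym] Un_empty simp_thms)
qed

lemma toi_immersion_route4: "toi_immersion X 4 terminal route4"
  unfolding toi_immersion_iff
proof (intro conjI allI impI)
  show "inj_on terminal {..<4}"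
    using G_terminals H_terminals by (auto simp: terminal_def inj_on_def less_Suc_eq numeral_eq_Suc)
  show "terminal ` {..<4} \<subseteq> verts X"
    using G_terminals H_terminals by (auto simp: terminal_image verts_cart_prod)
  show "odd_path X (terminal ` {..<4}) (terminal i) (terminal j) (route4 i j)"
    if "i < j \<and> j < 4" for i j
    using that odd_path_route4 by blast
  show "path_edges (route4 i j) \<inter> path_edges (route4 k l) = {}"
    if "i < j \<and> j < 4 \<and> k < l \<and> l < 4 \<and> (i, j) \<noteq> (k, l)" for i j k l
    using that route4_edges_disjoint by blast
qed

end

lemma has_toi_4_cart_prod:
  assumes "has_toi G 3" "has_toi H 3"
  shows "has_toi (cart_prod G H) 4"
proof -
  obtain a0 a1 a2 p01 p02 p12 b0 b1 b2 q01 q02 q12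
    where "odd_triangles G a0 a1 a2 p01 p02 p12 H b0 b1 b2 q01 q02 q12"
    using has_toi_3_odd_triangle[OF assms(1)] has_toi_3_odd_triangle[OF assms(2)]
    by (auto simp: odd_triangles_def)
  then show ?thesis
    unfolding has_toi_def by (blast dest: odd_triangles.toi_immersion_route4)
qed

section \<open>Routes of a totally odd immersion\<close>

definition neighbours :: "'a graph \<Rightarrow> 'a \<Rightarrow> 'a set" where
  "neighbours G v = {w. {v, w} \<in> edges G}"

lemma neighbours_sym: "w \<in> neighbours G v \<longleftrightarrow> v \<in> neighbours G w"
  by (simp add: neighbours_def insert_commute)

locale totally_odd_immersion =
  fixes G :: "'a graph" and t :: nat and f :: "nat \<Rightarrow> 'a" and P :: "nat \<Rightarrow> nat \<Rightarrow> 'a list"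
  assumes immersion: "toi_immersion G t f P"
begin

abbreviation terminals :: "'a set" where
  "terminals \<equiv> f ` {..<t}"

definition route :: "nat \<Rightarrow> nat \<Rightarrow> 'a list" where
  "route i j = (if i < j then P i j else rev (P j i))"

definition saturated :: "nat \<Rightarrow> bool" where
  "saturated k \<longleftrightarrow> finite (neighbours G (f k)) \<and> card (neighbours G (f k)) \<le> t - 1"

lemma terminal_eq_iff: "i < t \<Longrightarrow> j < t \<Longrightarrow> f i = f j \<longleftrightarrow> i = j"
  using immersion inj_on_eq_iff[of f "{..<t}" i j] by (simp add: toi_immersion_def)

lemma route_swap: "i \<noteq> j \<Longrightarrow> route j i = rev (route i j)"
  by (auto simp: route_def)

lemma odd_path_P: "i < j \<Longrightarrow> j < t \<Longrightarrow> odd_path G terminals (f i) (f j) (P i j)"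
  using immersion by (simp add: toi_immersion_iff)

lemma P_edges_disjoint:
  "i < j \<Longrightarrow> j < t \<Longrightarrow> k < l \<Longrightarrow> l < t \<Longrightarrow> (i, j) \<noteq> (k, l) \<Longrightarrow>
   path_edges (P i j) \<inter> path_edges (P k l) = {}"
  using immersion by (simp add: toi_immersion_iff)

lemma odd_path_route:
  assumes "i < t" "j < t" "i \<noteq> j"
  shows "odd_path G terminals (f i) (f j) (route i j)"
  using assms odd_path_P[of i j] odd_path_rev[OF odd_path_P[of j i]]
  by (cases "i < j") (simp_all add: route_def)

lemma path_edges_route: "path_edges (route i j) = path_edges (P (min i j) (max i j))"
  by (simp add: route_def min_def max_def)

lemma route_edges_disjoint:
  assumes "i < t" "j < t" "k < t" "l < t" "i \<noteq> j" "k \<noteq> l" "{i, j} \<noteq> {k, l}"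
  shows "path_edges (route i j) \<inter> path_edges (route k l) = {}"
  unfolding path_edges_route
proof (rule P_edges_disjoint)
  show "(min i j, max i j) \<noteq> (min k l, max k l)"
    using assms(7) by (auto simp: min_def max_def split: if_splits)
qed (use assms in \<open>auto simp: min_def max_def\<close>)

lemma route_shared_edge:
  assumes "e \<in> path_edges (route i j)" "e \<in> path_edges (route k l)"
    and "i < t" "j < t" "k < t" "l < t" "i \<noteq> j" "k \<noteq> l"
  shows "{i, j} = {k, l}"
  using route_edges_disjoint[OF assms(3-8)] assms(1,2) by blast

lemmas route_nth = odd_path_nth[OF odd_path_route]

lemma route_edges_subset: "i < t \<Longrightarrow> j < t \<Longrightarrow> i \<noteq> j \<Longrightarrow> path_edges (route i j) \<subseteq> edges G"
  using odd_path_route by (auto simp: odd_path_def is_path_iff)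

lemma route_first_edge:
  assumes "k < t" "m < t" "k \<noteq> m"
  shows "{f k, route k m ! 1} \<in> path_edges (route k m)"
  using nth_edge_in_path_edges[of 0 "route k m"] route_nth(1,3)[OF assms] by simp

lemma route_second_vertex:
  assumes "k < t" "saturated k" "w \<in> neighbours G (f k)"
  obtains m where "m < t" "m \<noteq> k" "route k m ! 1 = w"
proof -
  define M where "M = {..<t} - {k}"
  define s where "s m = route k m ! 1" for m
  have "s ` M \<subseteq> neighbours G (f k)"
    using route_first_edge route_edges_subset assms(1)
    by (fastforce simp: M_def s_def neighbours_def)
  moreover have "inj_on s M"
  proof (rule inj_onI)
    fix m m' assume m: "m \<in> M" "m' \<in> M" "s m = s m'"
    then have "{k, m} = {k, m'}"
      using route_first_edge[of k m] route_first_edge[of k m'] assms(1)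
      by (intro route_shared_edge[of "{f k, s m}"]) (auto simp: M_def s_def)
    then show "m = m'"
      using m(1) by (auto simp: M_def doubleton_eq_iff)
  qed
  then have "card (s ` M) = t - 1"
    using assms(1) by (simp add: card_image M_def)
  ultimately have "s ` M = neighbours G (f k)"
    using card_seteq[of "neighbours G (f k)" "s ` M"] assms(2) by (simp add: saturated_def)
  then obtain m where "m \<in> M" "s m = w"
    using assms(3) by (metis imageE)
  then show thesis
    using that[of m] by (simp add: M_def s_def)
qed

lemma route_continues:
  assumes "k < t" "m < t" "k \<noteq> m" "route k m ! 1 \<notin> terminals"
  shows "4 \<le> length (route k m)" "route k m ! 2 \<notin> terminals"
    "route k m ! 2 \<in> neighbours G (route k m ! 1)"
proof -
  note r = route_nth[OF assms(1-3)]
  have "length (route k m) \<noteq> 2"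
  proof
    assume "length (route k m) = 2"
    then have "route k m ! 1 = f m"
      using r(2) by simp
    then show False
      using assms(2,4) by auto
  qed
  moreover have "\<And>n::nat. n \<noteq> 2 \<Longrightarrow> 2 \<le> n \<Longrightarrow> even n \<Longrightarrow> 4 \<le> n"
    by presburger
  ultimately show four: "4 \<le> length (route k m)"
    using r(3,4) by blast
  show "route k m ! 2 \<notin> terminals"
    using four r(6)[of 2] by simp
  show "route k m ! 2 \<in> neighbours G (route k m ! 1)"
    using four r(7)[of 1] by (simp add: neighbours_def numeral_2_eq_2)
qed

lemma route_via_nonterminal:
  assumes "k < t" "saturated k" "x \<in> neighbours G (f k)" "x \<notin> terminals"
  obtains m where "m < t" "m \<noteq> k" "route k m ! 1 = x" "4 \<le> length (route k m)"
    "route k m ! 2 \<notin> terminals" "route k m ! 2 \<in> neighbours G x"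
proof -
  obtain m where m: "m < t" "m \<noteq> k" "route k m ! 1 = x"
    using route_second_vertex[OF assms(1-3)] .
  then show thesis
    using that route_continues[OF assms(1) m(1) m(2)[symmetric]] assms(4) by simp
qed

lemma route_between_adjacent_terminals:
  assumes "k < t" "m < t" "saturated k" "f m \<in> neighbours G (f k)"
  shows "route k m = [f k, f m]"
proof -
  obtain m' where m': "m' < t" "m' \<noteq> k" "route k m' ! 1 = f m"
    using route_second_vertex[OF assms(1,3,4)] .
  note r = route_nth[OF assms(1) m'(1) m'(2)[symmetric]]
  have "\<not> Suc 1 < length (route k m')"
    using r(6)[of 1] m'(3) assms(2) by auto
  then have two: "length (route k m') = 2"
    using r(3) by simp
  then have "f m' = f m"
    using r(2) m'(3) by simp
  then have "m' = m"
    using terminal_eq_iff m'(1) assms(2) by blast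
  with two r(1) m'(3) show ?thesis
    by (auto simp: length_Suc_conv numeral_2_eq_2)
qed

lemma route_start_unique:
  assumes "k < t" "m < t" "k \<noteq> m" "k' < t" "m' < t" "k' \<noteq> m'"
    and "4 \<le> length (route k m)" "4 \<le> length (route k' m')"
    and "route k m ! 1 = route k' m' ! 1" "route k m ! 2 = route k' m' ! 2"
  shows "k = k'"
proof -
  let ?q = "route k m" and ?q' = "route k' m'"
  have "{?q ! 1, ?q ! 2} \<in> path_edges ?q"
    using nth_edge_in_path_edges[of 1 ?q] assms(7) by (simp add: numeral_2_eq_2)
  moreover have "{?q ! 1, ?q ! 2} \<in> path_edges ?q'"
    using nth_edge_in_path_edges[of 1 ?q'] assms(8-10) by (simp add: numeral_2_eq_2)
  ultimately have "{k, m} = {k', m'}"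
    using route_shared_edge assms(1-6) by blast
  then consider "k = k'" | "k = m'" "m = k'"
    by (auto simp: doubleton_eq_iff)
  then show ?thesis
  proof cases
    case 2
    then have "rev ?q ! 1 = ?q ! 1"
      using assms(9) route_swap[OF assms(3)] by simp
    then show ?thesis
      using route_nth(5)[OF assms(1-3)] assms(7) by (simp add: rev_nth nth_eq_iff_index_eq)
  qed
qed

lemma route_entering_third_vertex:
  assumes "k < t" "m < t" "k \<noteq> m" "k' < t" "m' < t" "k' \<noteq> m'" "3 \<le> length (route k m)"
    and "route k' m' ! 1 = route k m ! 2"
    and "{route k' m' ! 1, route k' m' ! 2} \<in> path_edges (route k m)"
    and "{route k' m' ! 1, route k' m' ! 2} \<in> path_edges (route k' m')"
  shows "length (route k m) = 4"
proof -
  let ?q = "route k m"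
  have "{k, m} = {k', m'}"
    using route_shared_edge[OF assms(9,10)] assms(1-6) by blast
  then consider "k' = k" "m' = m" | "k' = m" "m' = k"
    by (auto simp: doubleton_eq_iff)
  then show ?thesis
  proof cases
    case 1
    then show ?thesis
      using assms(7,8) route_nth(5)[OF assms(1-3)] by (simp add: nth_eq_iff_index_eq)
  next
    case 2
    then have "rev ?q ! 1 = ?q ! 2"
      using assms(8) route_swap[OF assms(3)] by simp
    then show ?thesis
      using route_nth(5)[OF assms(1-3)] assms(7) by (simp add: rev_nth nth_eq_iff_index_eq)
  qed
qed

lemma card_terminal_neighbours:
  assumes "x \<notin> terminals" "finite (neighbours G x)" "\<And>k. k < t \<Longrightarrow> saturated k"
  shows "2 * card (neighbours G x \<inter> terminals) \<le> card (neighbours G x)"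
proof -
  define A where "A = neighbours G x \<inter> terminals"
  have "\<forall>a\<in>A. \<exists>k m. k < t \<and> f k = a \<and> m < t \<and> m \<noteq> k \<and> route k m ! 1 = x \<and>
      4 \<le> length (route k m) \<and> route k m ! 2 \<in> neighbours G x - terminals"
  proof
    fix a assume "a \<in> A"
    then obtain k where k: "k < t" "f k = a" "x \<in> neighbours G (f k)"
      by (auto simp: A_def neighbours_sym)
    then show "\<exists>k m. k < t \<and> f k = a \<and> m < t \<and> m \<noteq> k \<and> route k m ! 1 = x \<and>
      4 \<le> length (route k m) \<and> route k m ! 2 \<in> neighbours G x - terminals"
      using route_via_nonterminal[OF k(1) assms(3)[OF k(1)] k(3) assms(1)] by blast
  qed
  then obtain K M where KM: "\<And>a. a \<in> A \<Longrightarrow> K a < t \<and> f (K a) = a \<and> M a < t \<and> M a \<noteq> K a \<and>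
      route (K a) (M a) ! 1 = x \<and> 4 \<le> length (route (K a) (M a)) \<and>
      route (K a) (M a) ! 2 \<in> neighbours G x - terminals"
    by metis
  define y where "y a = route (K a) (M a) ! 2" for a
  have "inj_on y A"
  proof (rule inj_onI)
    fix a b assume ab: "a \<in> A" "b \<in> A" "y a = y b"
    then have "K a = K b"
      using KM[OF ab(1)] KM[OF ab(2)] by (intro route_start_unique) (auto simp: y_def)
    then show "a = b"
      using KM[OF ab(1)] KM[OF ab(2)] by metis
  qed
  moreover have "y ` A \<subseteq> neighbours G x - terminals"
    using KM by (auto simp: y_def)
  ultimately have "card (A \<union> y ` A) = 2 * card A"
    using assms(2) by (subst card_Un_disjoint) (auto simp: A_def card_image intro: finite_subset)
  moreover have "card (A \<union> y ` A) \<le> card (neighbours G x)"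
    using \<open>y ` A \<subseteq> neighbours G x - terminals\<close> by (intro card_mono[OF assms(2)]) (auto simp: A_def)
  ultimately show ?thesis
    by (simp add: A_def)
qed

end

section \<open>The graph K3 \<box> K3\<close>

lemma lessThan_3: "{..<3} = {0, 1, 2::nat}"
  by (auto simp: less_Suc_eq numeral_3_eq_3)

lemma verts_K3: "verts K3 = {..<3}"
  by (simp add: K3_def verts_def lessThan_3)

lemma edges_K3_iff: "{a, b} \<in> edges K3 \<longleftrightarrow> a < 3 \<and> b < 3 \<and> a \<noteq> b"
  unfolding K3_def edges_def snd_conv lessThan_iff[symmetric] lessThan_3
  by (auto simp: doubleton_eq_iff)

abbreviation K3_square :: "(nat \<times> nat) graph" where
  "K3_square \<equiv> cart_prod K3 K3"

lemma verts_K3_square: "verts K3_square = {..<3} \<times> {..<3}"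
  by (simp add: verts_cart_prod verts_K3)

lemma neighbours_K3_square_iff:
  "w \<in> neighbours K3_square v \<longleftrightarrow>
     v \<in> verts K3_square \<and> w \<in> verts K3_square \<and> v \<noteq> w \<and> (fst v = fst w \<or> snd v = snd w)"
  by (cases v; cases w) (auto simp: neighbours_def edges_cart_prod_iff edges_K3_iff verts_K3_square verts_K3)

lemma neighbours_K3_square_prod:
  assumes "r < 3" "c < 3"
  shows "neighbours K3_square (r, c) = {r} \<times> ({..<3} - {c}) \<union> ({..<3} - {r}) \<times> {c}"
  using assms by (auto simp: neighbours_K3_square_iff verts_K3_square)

lemma lessThan_3_remove:
  assumes "x < 3"
  shows "{..<3} - {x} = {(x + 1) mod 3, (x + 2) mod 3::nat}"
proof -
  have "x = 0 \<or> x = 1 \<or> x = 2"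
    using assms by auto
  then show ?thesis
    by (elim disjE) (auto simp: lessThan_3)
qed

lemma neighbours_K3_square:
  assumes "r < 3" "c < 3"
  shows "neighbours K3_square (r, c) =
    {(r, (c + 1) mod 3), (r, (c + 2) mod 3), ((r + 1) mod 3, c), ((r + 2) mod 3, c)}"
  using assms by (auto simp: neighbours_K3_square_prod lessThan_3_remove)

lemma card_neighbours_K3_square:
  "v \<in> verts K3_square \<Longrightarrow> card (neighbours K3_square v) = 4"
proof (cases v)
  case (Pair r c)
  assume "v \<in> verts K3_square"
  then have "r = 0 \<or> r = 1 \<or> r = 2" "c = 0 \<or> c = 1 \<or> c = 2"
    using Pair by (auto simp: verts_K3_square)
  then show ?thesis
    using Pair by (elim disjE) (simp_all add: neighbours_K3_square)
qed

lemma finite_neighbours_K3_square: "finite (neighbours K3_square v)"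
  by (rule finite_subset[of _ "verts K3_square"]) (auto simp: neighbours_K3_square_iff verts_K3_square)

lemma cross_grid:
  fixes B :: "nat \<Rightarrow> nat \<Rightarrow> bool"
  assumes card: "(\<Sum>r<3. \<Sum>c<3. of_bool (B r c)) = (5::nat)"
    and sparse: "\<And>r c. r < 3 \<Longrightarrow> c < 3 \<Longrightarrow> \<not> B r c \<Longrightarrow>
      of_bool (B r ((c + 1) mod 3)) + of_bool (B r ((c + 2) mod 3)) +
      of_bool (B ((r + 1) mod 3) c) + of_bool (B ((r + 2) mod 3) c) \<le> (2::nat)"
  shows "\<exists>r0<3. \<exists>c0<3. \<forall>r<3. \<forall>c<3. B r c \<longleftrightarrow> r = r0 \<or> c = c0"
proof -
  have mod3: "(0 + 1) mod 3 = (1::nat)" "(0 + 2) mod 3 = (2::nat)" "(1 + 1) mod 3 = (2::nat)"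
    "(1 + 2) mod 3 = (0::nat)" "(2 + 1) mod 3 = (0::nat)" "(2 + 2) mod 3 = (1::nat)"
    by simp_all
  have total: "of_bool (B 0 0) + of_bool (B 0 1) + of_bool (B 0 2) + of_bool (B 1 0) + of_bool (B 1 1) +
      of_bool (B 1 2) + of_bool (B 2 0) + of_bool (B 2 1) + of_bool (B 2 2) = (5::nat)"
    using card by (simp add: lessThan_3 add.assoc del: sum_of_bool_eq)
  have "\<exists>r0\<in>{0, 1, 2}. \<exists>c0\<in>{0, 1, 2}. \<forall>r\<in>{0, 1, 2}. \<forall>c\<in>{0, 1, 2}. B r c \<longleftrightarrow> r = r0 \<or> c = c0"
    using total sparse[of 0 0] sparse[of 0 1] sparse[of 0 2] sparse[of 1 0] sparse[of 1 1]
      sparse[of 1 2] sparse[of 2 0] sparse[of 2 1] sparse[of 2 2]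
    unfolding mod3
    by (cases "B 0 0"; simp_all; cases "B 0 1"; simp_all; cases "B 0 2"; simp_all;
        cases "B 1 0"; simp_all; cases "B 1 1"; simp_all; cases "B 1 2"; simp_all;
        cases "B 2 0"; simp_all; cases "B 2 1"; simp_all; cases "B 2 2"; simp_all)
  then show ?thesis
    unfolding lessThan_3[symmetric] by (metis lessThan_iff)
qed

lemma K3_square_cross:
  assumes "T \<subseteq> verts K3_square" "card T = 5"
    and "\<And>x. x \<in> verts K3_square \<Longrightarrow> x \<notin> T \<Longrightarrow> card (neighbours K3_square x \<inter> T) \<le> 2"
  obtains r0 c0 where "r0 < 3" "c0 < 3" "T = {v \<in> verts K3_square. fst v = r0 \<or> snd v = c0}"
proof -
  have "(\<Sum>r<3. \<Sum>c<3. of_bool ((r, c) \<in> T)) = card T"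
    using assms(1) by (simp only: sum.cartesian_product case_prod_unfold prod.collapse)
      (simp add: verts_K3_square Int_absorb1)
  moreover have "of_bool ((r, (c + 1) mod 3) \<in> T) + of_bool ((r, (c + 2) mod 3) \<in> T) +
      of_bool (((r + 1) mod 3, c) \<in> T) + of_bool (((r + 2) mod 3, c) \<in> T) \<le> (2::nat)"
    if "r < 3" "c < 3" "(r, c) \<notin> T" for r c
  proof -
    have "r \<noteq> (r + 1) mod 3" "r \<noteq> (r + 2) mod 3" "(r + 1) mod 3 \<noteq> (r + 2) mod 3"
      "c \<noteq> (c + 1) mod 3" "c \<noteq> (c + 2) mod 3" "(c + 1) mod 3 \<noteq> (c + 2) mod 3"
      using that(1,2) by presburger+
    moreover have "(\<Sum>x\<in>neighbours K3_square (r, c). of_bool (x \<in> T)) \<le> (2::nat)"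
      using assms(3)[of "(r, c)"] that finite_neighbours_K3_square by (simp add: verts_K3_square)
    ultimately show ?thesis
      using that(1,2) by (simp add: neighbours_K3_square add.assoc del: sum_of_bool_eq)
  qed
  ultimately obtain r0 c0 where "r0 < 3" "c0 < 3" "\<forall>r<3. \<forall>c<3. (r, c) \<in> T \<longleftrightarrow> r = r0 \<or> c = c0"
    using cross_grid[of "\<lambda>r c. (r, c) \<in> T"] assms(2) by auto
  moreover from this(3) have "T = {v \<in> verts K3_square. fst v = r0 \<or> snd v = c0}"
    using assms(1) by (auto simp: verts_K3_square)
  ultimately show thesis
    using that by blast
qed

section \<open>No totally odd immersion of K5 in K3 \<box> K3\<close>

definition rectangle :: "nat \<Rightarrow> nat \<Rightarrow> (nat \<times> nat) set" where
  "rectangle r0 c0 = {v. fst v < 3 \<and> snd v < 3 \<and> fst v \<noteq> r0 \<and> snd v \<noteq> c0}"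

lemma rectangle_row_mate_unique:
  assumes "u \<in> rectangle r0 c0" "a \<in> rectangle r0 c0" "b \<in> rectangle r0 c0" "c0 < 3"
    and "a \<noteq> u" "b \<noteq> u" "fst a = fst u" "fst b = fst u"
  shows "a = b"
  using assms unfolding rectangle_def by (cases a; cases b; cases u) auto

lemma rectangle_column_mate_unique:
  assumes "u \<in> rectangle r0 c0" "a \<in> rectangle r0 c0" "b \<in> rectangle r0 c0" "r0 < 3"
    and "a \<noteq> u" "b \<noteq> u" "snd a = snd u" "snd b = snd u"
  shows "a = b"
  using assms unfolding rectangle_def by (cases a; cases b; cases u) auto

lemma rectangle_neighbours:
  assumes "y \<in> rectangle r0 c0" "x \<in> rectangle r0 c0" "w \<in> rectangle r0 c0" "z \<in> rectangle r0 c0"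
    and "r0 < 3" "c0 < 3" "x \<noteq> w"
    and "x \<in> neighbours K3_square y" "w \<in> neighbours K3_square y" "z \<in> neighbours K3_square y"
  shows "z = x \<or> z = w"
  using assms unfolding neighbours_K3_square_iff
  by (metis rectangle_row_mate_unique rectangle_column_mate_unique prod_eqI)

locale rectangle_routing =
  fixes r0 c0 :: nat and Y :: "nat \<times> nat \<Rightarrow> nat \<times> nat"
  assumes r0: "r0 < 3" and c0: "c0 < 3"
    and step: "\<And>x. x \<in> rectangle r0 c0 \<Longrightarrow>
      Y x \<in> rectangle r0 c0 \<and> Y x \<noteq> x \<and> (fst (Y x) = fst x \<or> snd (Y x) = snd x)"
    and edges_distinct: "\<And>x x'. x \<in> rectangle r0 c0 \<Longrightarrow> x' \<in> rectangle r0 c0 \<Longrightarrow> x \<noteq> x' \<Longrightarrow>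
      {x, Y x} \<noteq> {x', Y x'}"
    and ends_distinct: "\<And>x x'. x \<in> rectangle r0 c0 \<Longrightarrow> x' \<in> rectangle r0 c0 \<Longrightarrow> x \<noteq> x' \<Longrightarrow>
      (snd x, fst (Y x)) \<noteq> (snd x', fst (Y x'))"
begin

lemma no_return:
  assumes "x \<in> rectangle r0 c0"
  shows "Y (Y x) \<noteq> x"
proof
  assume "Y (Y x) = x"
  then have "{Y x, Y (Y x)} = {x, Y x}"
    by auto
  moreover have "{Y x, Y (Y x)} \<noteq> {x, Y x}"
    using edges_distinct[of "Y x" x] step[OF assms] assms by blast
  ultimately show False
    by contradiction
qed

lemma no_column_step:
  assumes x: "x \<in> rectangle r0 c0" and column: "snd (Y x) = snd x"
  shows False
proof -
  let ?y = "Y x"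
  have y: "?y \<in> rectangle r0 c0" "?y \<noteq> x"
    using step[OF x] by blast+
  have z: "Y ?y \<in> rectangle r0 c0" "Y ?y \<noteq> ?y" "Y ?y \<noteq> x"
    using step[OF y(1)] no_return[OF x] by blast+
  have "snd (Y ?y) \<noteq> snd ?y"
  proof
    assume "snd (Y ?y) = snd ?y"
    then have "Y ?y = x"
      by (rule rectangle_column_mate_unique[OF y(1) z(1) x r0 z(2) y(2)[symmetric] _ column[symmetric]])
    with z(3) show False
      by contradiction
  qed
  then have "fst (Y ?y) = fst ?y"
    using step[OF y(1)] by blast
  \<comment> \<open>so the routes through \<open>x\<close> and through \<open>Y x\<close> join the same pair of terminals\<close>
  then show False
    using ends_distinct[OF y(1) x y(2)] column by simp
qed

lemma impossible: False
proof -
  define x0 :: "nat \<times> nat" where "x0 = (if r0 = 0 then 1 else 0, if c0 = 0 then 1 else 0)"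
  have x0: "x0 \<in> rectangle r0 c0"
    by (simp add: x0_def rectangle_def)
  show False
  proof (cases "snd (Y x0) = snd x0")
    case True
    then show False
      using no_column_step[OF x0] by simp
  next
    case False
    let ?x1 = "Y x0"
    have x1: "?x1 \<in> rectangle r0 c0" "?x1 \<noteq> x0" "fst ?x1 = fst x0"
      using step[OF x0] False by auto
    have z: "Y ?x1 \<in> rectangle r0 c0" "Y ?x1 \<noteq> ?x1" "Y ?x1 \<noteq> x0"
      using step[OF x1(1)] no_return[OF x0] by blast+
    have "fst (Y ?x1) \<noteq> fst ?x1"
    proof
      assume "fst (Y ?x1) = fst ?x1"
      then have "Y ?x1 = x0"
        by (rule rectangle_row_mate_unique[OF x1(1) z(1) x0 c0 z(2) x1(2)[symmetric] _ x1(3)[symmetric]])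
      with z(3) show False
        by contradiction
    qed
    then have "snd (Y ?x1) = snd ?x1"
      using step[OF x1(1)] by blast
    then show False
      using no_column_step[OF x1(1)] by simp
  qed
qed

end

locale K5_in_K3_square = totally_odd_immersion K3_square 5 f P
  for f :: "nat \<Rightarrow> nat \<times> nat" and P
begin

lemma terminals_subset: "terminals \<subseteq> verts K3_square"
  using immersion by (simp add: toi_immersion_def)

lemma saturated_K3_square:
  assumes "k < 5"
  shows "saturated k"
proof -
  have "f k \<in> verts K3_square"
    using terminals_subset assms by auto
  then show ?thesis
    by (simp add: saturated_def card_neighbours_K3_square finite_neighbours_K3_square)
qed

lemma terminals_cross:
  obtains r0 c0 where "r0 < 3" "c0 < 3" "terminals = {v \<in> verts K3_square. fst v = r0 \<or> snd v = c0}"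
proof (rule K3_square_cross)
  show "card terminals = 5"
    using immersion by (simp add: toi_immersion_def card_image)
  fix x assume "x \<in> verts K3_square" "x \<notin> terminals"
  then show "card (neighbours K3_square x \<inter> terminals) \<le> 2"
    using card_terminal_neighbours[OF _ finite_neighbours_K3_square saturated_K3_square]
      card_neighbours_K3_square by fastforce
qed (use that terminals_subset in auto)

end

locale K5_in_K3_square_cross = K5_in_K3_square +
  fixes r0 c0 :: nat
  assumes r0: "r0 < 3" and c0: "c0 < 3"
    and cross: "terminals = {v \<in> verts K3_square. fst v = r0 \<or> snd v = c0}"
begin

lemma nonterminal_iff: "v \<in> verts K3_square \<Longrightarrow> v \<notin> terminals \<longleftrightarrow> v \<in> rectangle r0 c0"
  by (auto simp: cross rectangle_def verts_K3_square)

lemma rectangle_subset: "rectangle r0 c0 \<subseteq> verts K3_square - terminals"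
  by (auto simp: cross rectangle_def verts_K3_square)

lemma column_terminal:
  assumes "x \<in> rectangle r0 c0"
  obtains k where "k < 5" "f k = (r0, snd x)" "x \<in> neighbours K3_square (f k)"
proof -
  have "(r0, snd x) \<in> terminals"
    using assms r0 by (simp add: cross rectangle_def verts_K3_square)
  then obtain k where "k < 5" "f k = (r0, snd x)"
    by auto
  moreover have "x \<in> neighbours K3_square (r0, snd x)"
    using assms r0 by (cases x) (auto simp: rectangle_def neighbours_K3_square_iff verts_K3_square)
  ultimately show thesis
    using that by simp
qed

lemma terminal_neighbours:
  assumes "x \<in> rectangle r0 c0" "w \<in> neighbours K3_square x" "w \<in> terminals"
  shows "w = (r0, snd x) \<or> w = (fst x, c0)"
  using assms by (cases x; cases w) (auto simp: rectangle_def neighbours_K3_square_iff cross)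

lemma nonterminal_neighbour:
  assumes "x \<in> rectangle r0 c0" "w \<in> neighbours K3_square x" "w \<notin> terminals"
  shows "w \<in> rectangle r0 c0" "fst w = fst x \<or> snd w = snd x" "w \<noteq> x"
  using assms nonterminal_iff by (auto simp: neighbours_K3_square_iff)

lemma route_interior_in_rectangle:
  assumes "k < 5" "m < 5" "k \<noteq> m" "0 < i" "Suc i < length (route k m)"
  shows "route k m ! i \<in> rectangle r0 c0"
proof -
  have "route k m ! i \<in> verts K3_square"
    using odd_path_route[OF assms(1-3)] assms(5) by (auto simp: odd_path_def is_path_def)
  then show ?thesis
    using route_nth(6)[OF assms] nonterminal_iff by blast
qed

lemma route_from_column_terminal:
  assumes y: "y \<in> rectangle r0 c0"
  obtains k m where "k < 5" "m < 5" "k \<noteq> m" "f k = (r0, snd y)" "route k m ! 1 = y"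
    "4 \<le> length (route k m)" "route k m ! 2 \<in> rectangle r0 c0"
    "route k m ! 2 \<in> neighbours K3_square y"
proof -
  obtain k where k: "k < 5" "f k = (r0, snd y)" "y \<in> neighbours K3_square (f k)"
    using column_terminal[OF y] .
  obtain m where "m < 5" "m \<noteq> k" "route k m ! 1 = y" "4 \<le> length (route k m)"
    "route k m ! 2 \<notin> terminals" "route k m ! 2 \<in> neighbours K3_square y"
    using route_via_nonterminal[OF k(1) saturated_K3_square[OF k(1)] k(3)] y rectangle_subset by blast
  with k show thesis
    using that nonterminal_neighbour[OF y] by blast
qed

lemma route_length_four:
  assumes "k < 5" "m < 5" "k \<noteq> m" "route k m ! 1 \<notin> terminals"
  shows "length (route k m) = 4"
proof (rule ccontr)
  let ?q = "route k m"
  note q = route_nth[OF assms(1-3)]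
  assume "length ?q \<noteq> 4"
  with route_continues(1)[OF assms] q(4) have six: "6 \<le> length ?q"
    by (auto elim!: evenE)
  define x y w where "x = ?q ! 1" and "y = ?q ! 2" and "w = ?q ! 3"
  have inner: "x \<in> rectangle r0 c0" "y \<in> rectangle r0 c0" "w \<in> rectangle r0 c0"
    using route_interior_in_rectangle[OF assms(1-3)] six by (simp_all add: x_def y_def w_def)
  have xy: "{x, y} \<in> path_edges ?q" and yw: "{y, w} \<in> path_edges ?q"
    using nth_edge_in_path_edges[of 1 ?q] nth_edge_in_path_edges[of 2 ?q] six
    by (simp_all add: x_def y_def w_def numeral_2_eq_2 numeral_3_eq_3)
  have "x \<noteq> w"
    using q(5) six by (auto simp: x_def w_def nth_eq_iff_index_eq)
  \<comment> \<open>both rectangle edges at \<open>y\<close> lie on this route, but the route entering \<open>y\<close> from its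
    column terminal continues along one of them\<close>
  obtain k' m' where m': "k' < 5" "m' < 5" "m' \<noteq> k'" "route k' m' ! 1 = y"
    "4 \<le> length (route k' m')" "route k' m' ! 2 \<in> rectangle r0 c0"
    "route k' m' ! 2 \<in> neighbours K3_square y"
    using route_from_column_terminal[OF inner(2)] by metis
  define z where "z = route k' m' ! 2"
  have "x \<in> neighbours K3_square y" "w \<in> neighbours K3_square y"
    using xy yw route_edges_subset[OF assms(1-3)] by (auto simp: neighbours_def insert_commute)
  moreover have "z \<in> rectangle r0 c0" "z \<in> neighbours K3_square y"
    using m'(6,7) by (simp_all add: z_def)
  ultimately have "z = x \<or> z = w"
    using rectangle_neighbours[OF inner(2,1,3) _ r0 c0 \<open>x \<noteq> w\<close>] by blast
  then have "{y, z} \<in> path_edges ?q"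
    using xy yw by (auto simp: insert_commute)
  moreover have "{y, z} \<in> path_edges (route k' m')"
    using nth_edge_in_path_edges[of 1 "route k' m'"] m'(4,5) by (simp add: z_def numeral_2_eq_2)
  ultimately have "length ?q = 4"
    using route_entering_third_vertex[OF assms(1-3) m'(1,2) m'(3)[symmetric]] m'(4) six
    by (simp add: y_def z_def)
  with \<open>length ?q \<noteq> 4\<close> show False
    by contradiction
qed

definition rectangle_route :: "nat \<times> nat \<Rightarrow> nat \<Rightarrow> nat \<Rightarrow> nat \<times> nat \<Rightarrow> bool" where
  "rectangle_route x k m y \<longleftrightarrow> k < 5 \<and> m < 5 \<and> k \<noteq> m \<and>
     f k = (r0, snd x) \<and> f m = (fst y, c0) \<and> route k m = [f k, x, y, f m] \<and>
     y \<in> rectangle r0 c0 \<and> y \<noteq> x \<and> (fst y = fst x \<or> snd y = snd x)"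

lemma route_ends_in_row:
  assumes "k < 5" "m < 5" "k \<noteq> m" "fst (f k) = r0" "length (route k m) = 4"
  shows "f m = (fst (route k m ! 2), c0)"
proof -
  let ?q = "route k m"
  note q = route_nth[OF assms(1-3)]
  have y: "?q ! 2 \<in> rectangle r0 c0"
    using route_interior_in_rectangle[OF assms(1-3)] assms(5) by simp
  have "f m \<in> neighbours K3_square (?q ! 2)"
    using q(7)[of 2] q(2) assms(5) by (simp add: neighbours_def numeral_3_eq_3)
  then have "f m = (r0, snd (?q ! 2)) \<or> f m = (fst (?q ! 2), c0)"
    using terminal_neighbours[OF y] assms(2) by blast
  moreover have "f m \<notin> neighbours K3_square (f k)"
  proof
    assume "f m \<in> neighbours K3_square (f k)"
    then have "?q = [f k, f m]"
      by (rule route_between_adjacent_terminals[OF assms(1,2) saturated_K3_square[OF assms(1)]])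
    with assms(5) show False
      by simp
  qed
  moreover have "f m \<noteq> f k" "f k \<in> verts K3_square" "f m \<in> verts K3_square"
    using terminal_eq_iff assms(1-3) terminals_subset by auto
  ultimately show ?thesis
    using assms(4) by (auto simp: neighbours_K3_square_iff)
qed

lemma route_through_rectangle:
  assumes x: "x \<in> rectangle r0 c0"
  shows "\<exists>k m y. rectangle_route x k m y"
proof -
  obtain k m where km: "k < 5" "m < 5" "k \<noteq> m" "f k = (r0, snd x)" "route k m ! 1 = x"
    "route k m ! 2 \<in> rectangle r0 c0" "route k m ! 2 \<in> neighbours K3_square x"
    using route_from_column_terminal[OF x] by metis
  let ?q = "route k m"
  define y where "y = ?q ! 2"
  have four: "length ?q = 4"
    using route_length_four[OF km(1-3)] km(5) x rectangle_subset by auto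
  have "y \<noteq> x" "fst y = fst x \<or> snd y = snd x"
    using km(7) by (auto simp: y_def neighbours_K3_square_iff)
  moreover have "f m = (fst y, c0)"
    using route_ends_in_row[OF km(1-3)] km(4) four by (simp add: y_def)
  moreover have "?q = [?q ! 0, ?q ! 1, ?q ! 2, ?q ! 3]"
    using four by (auto simp: length_Suc_conv numeral_eq_Suc)
  then have "?q = [f k, x, y, f m]"
    using route_nth(1,2)[OF km(1-3)] four km(5) by (simp add: y_def)
  ultimately show ?thesis
    using km unfolding rectangle_route_def y_def by blast
qed

lemma rectangle_routes_distinct:
  assumes "rectangle_route x k m y" "rectangle_route x' k' m' y'" "x \<in> rectangle r0 c0" "x \<noteq> x'"
  shows "{k, m} \<noteq> {k', m'}"
proof
  assume "{k, m} = {k', m'}"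
  then consider "k = k'" "m = m'" | "k = m'"
    by (auto simp: doubleton_eq_iff)
  then show False
  proof cases
    case 1
    then show False
      using assms(1,2,4) by (auto simp: rectangle_route_def)
  next
    case 2
    then show False
      using assms(1-3) by (auto simp: rectangle_route_def rectangle_def)
  qed
qed

lemma inconsistent: False
proof -
  let ?R = "rectangle r0 c0"
  obtain K M Y where KMY: "\<And>x. x \<in> ?R \<Longrightarrow> rectangle_route x (K x) (M x) (Y x)"
    using route_through_rectangle by metis
  have distinct: "{K x, M x} \<noteq> {K x', M x'}" if "x \<in> ?R" "x' \<in> ?R" "x \<noteq> x'" for x x'
    using rectangle_routes_distinct[OF KMY KMY] that by blast
  interpret rectangle_routing r0 c0 Y
  proof
    fix x x' assume xx': "x \<in> ?R" "x' \<in> ?R" "x \<noteq> x'"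
    note routes = KMY[OF xx'(1), unfolded rectangle_route_def] KMY[OF xx'(2), unfolded rectangle_route_def]
    show "{x, Y x} \<noteq> {x', Y x'}"
    proof
      assume "{x, Y x} = {x', Y x'}"
      then have "{x, Y x} \<in> path_edges (route (K x) (M x)) \<inter> path_edges (route (K x') (M x'))"
        using routes by simp
      then show False
        using route_edges_disjoint distinct[OF xx'] routes by blast
    qed
    show "(snd x, fst (Y x)) \<noteq> (snd x', fst (Y x'))"
    proof
      assume "(snd x, fst (Y x)) = (snd x', fst (Y x'))"
      then have "f (K x) = f (K x')" "f (M x) = f (M x')"
        using routes by simp_all
      then show False
        using terminal_eq_iff distinct[OF xx'] routes by metis
    qed
  qed (use r0 c0 KMY in \<open>auto simp: rectangle_route_def\<close>)
  show False
    by (rule impossible)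
qed

end

lemma (in K5_in_K3_square) inconsistent: False
proof -
  obtain r0 c0 where "r0 < 3" "c0 < 3" "terminals = {v \<in> verts K3_square. fst v = r0 \<or> snd v = c0}"
    using terminals_cross .
  then interpret K5_in_K3_square_cross f P r0 c0
    by unfold_locales
  show False
    by (rule inconsistent)
qed

theorem not_has_toi_5_K3_square: "\<not> has_toi K3_square 5"
proof
  assume "has_toi K3_square 5"
  then obtain f P where "toi_immersion K3_square 5 f P"
    by (auto simp: has_toi_def)
  then interpret K5_in_K3_square f P
    by unfold_locales
  show False
    by (rule inconsistent)
qed

lemma has_toi_3_K3: "has_toi K3 3"
proof -
  have "toi_immersion K3 3 id (\<lambda>i j. [i, j])"
    unfolding toi_immersion_def
    by (auto simp: verts_K3 edges_K3_iff is_path_def interior_def doubleton_eq_iff less_Suc_eq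
        numeral_3_eq_3)
  then show ?thesis
    unfolding has_toi_def by blast
qed

theorem toi_K3_square: "toi K3_square = 4"
  by (rule toi_eqI) (auto simp: verts_K3_square has_toi_4_cart_prod has_toi_3_K3 not_has_toi_5_K3_square)

theorem mainTheorem6:
  shows "(\<forall>(G :: 'a graph) (H :: 'b graph).
            simple_graph G \<and> simple_graph H \<and> connected_graph G \<and> connected_graph H \<and>
            toi G = 3 \<and> toi H = 3 \<longrightarrow> 4 \<le> toi (cart_prod G H))
         \<and> toi (cart_prod K3 K3) = 4"
proof (intro conjI allI impI)
  \<comment> \<open>only the finiteness of \<open>G\<close> and \<open>H\<close> is used\<close>
  fix G :: "'a graph" and H :: "'b graph"
  assume "simple_graph G \<and> simple_graph H \<and> connected_graph G \<and> connected_graph H \<and>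
    toi G = 3 \<and> toi H = 3"
  then have fin: "finite (verts G)" "finite (verts H)" and "toi G = 3" "toi H = 3"
    by (auto simp: simple_graph_def)
  then have "has_toi (cart_prod G H) 4"
    using has_toi_4_cart_prod has_toi_toi by metis
  then show "4 \<le> toi (cart_prod G H)"
    using fin by (simp add: le_toi verts_cart_prod)
qed (rule toi_K3_square)

end
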